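(* Let $\theta\ge0$, $\omega\in\mathbb R$, $a\in\mathbb R$. For every polynomial $f$, $$\bigl(\exp(a\Delta_{\theta,\omega})f\bigr)(z)=\bigl(\exp(\omega^{-1}(e^{a\omega}-1)\Delta_\theta)f\bigr)(e^{a\omega}z),$$ where all operator exponentials are defined by their (here finite) power series; i.e. $\exp(a\Delta_{\theta,\omega})=\exp(a\omega zD)\exp(\omega^{-1}(e^{a\omega}-1)\Delta_\theta)$ on polynomials.
   Context: $D=d/dz$, $\Delta_{\theta,\omega}=(\theta+\omega z)D+zD^2$, $\Delta_\theta=(\theta+zD)D$; $\exp(\gamma A)f=\sum_{k\ge0}\frac{\gamma^k}{k!}A^kf$, and $\exp(\gamma zD)f(z)=f(e^\gamma z)$. For $\omega=0$, $\omega^{-1}(e^{a\omega}-1)$ means $a$. *)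

theory Defs
  imports "HOL-Analysis.Analysis" "HOL-Computational_Algebra.Polynomial"
begin

text \<open>Operators on polynomials (complex coefficients, variable z).
  D = pderiv, multiplication by z = multiplication by [:0,1:].\<close>

definition Delta_tw :: "real \<Rightarrow> real \<Rightarrow> complex poly \<Rightarrow> complex poly" where
  "Delta_tw \<theta> \<omega> f =
     smult (complex_of_real \<theta>) (pderiv f)
   + smult (complex_of_real \<omega>) ([:0, 1:] * pderiv f)
   + [:0, 1:] * pderiv (pderiv f)"

definition Delta_t :: "real \<Rightarrow> complex poly \<Rightarrow> complex poly" where
  "Delta_t \<theta> f = smult (complex_of_real \<theta>) (pderiv f) + [:0, 1:] * pderiv (pderiv f)"

definition op_exp_term :: "real \<Rightarrow> (complex poly \<Rightarrow> complex poly) \<Rightarrow> complex poly \<Rightarrow> complex \<Rightarrow> nat \<Rightarrow> complex" where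
  "op_exp_term \<gamma> A f z k = complex_of_real (\<gamma> ^ k / fact k) * poly ((A ^^ k) f) z"

definition op_exp :: "real \<Rightarrow> (complex poly \<Rightarrow> complex poly) \<Rightarrow> complex poly \<Rightarrow> complex \<Rightarrow> complex" where
  "op_exp \<gamma> A f z = (\<Sum>k. op_exp_term \<gamma> A f z k)"

definition expm1_div :: "real \<Rightarrow> real \<Rightarrow> real" where
  "expm1_div a \<omega> = (if \<omega> = 0 then a else (exp (a * \<omega>) - 1) / \<omega>)"

end

theory Submission
  imports Defs
begin

(* Write E = zD. Then Delta_tw = w E + Delta_t with w = omega, and D = Delta_t satisfies
   D E = E D + D and strictly lowers degrees; nothing else about D is used. With C(x) = (e^(w x) - 1)/w consider the power series in x
     Phi[p](x) = sum_j C(x)^j / j! * (D^j p)(e^(w x) z),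
   a finite sum because D is nilpotent on p. Since C' = e^(w x) = 1 + w C,
   d/dx q(e^(w x) z) = w (E q)(e^(w x) z) and D^j E = E D^j + j D^j, one finds
   Phi[p]' = Phi[(w E + D) p] and Phi[p](0) = p(z), so the k-th coefficient of Phi[f] is
   ((w E + D)^k f)(z) / k!. Being a polynomial in exponential series, Phi[f] is entire, so
   its power series converges at x = a to the closed form. *)

unbundle no vec_syntax
unbundle fps_syntax

definition euler_op :: "'a::{comm_semiring_1,semiring_no_zero_divisors} poly \<Rightarrow> 'a poly" where
  "euler_op p = [:0, 1:] * pderiv p"

lemma coeff_euler_op: "coeff (euler_op p) n = of_nat n * coeff p n"
  by (cases n) (simp_all add: euler_op_def mult_pCons_left coeff_pderiv)

lemma euler_op_add: "euler_op (p + q) = euler_op p + euler_op q"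
  by (rule poly_eqI) (simp add: coeff_euler_op algebra_simps)

lemma euler_op_smult: "euler_op (smult c p) = smult c (euler_op p)"
  by (rule poly_eqI) (simp add: coeff_euler_op algebra_simps)

lemma coeff_funpow_euler_op: "coeff ((euler_op ^^ k) p) n = of_nat n ^ k * coeff p n"
  by (induction k) (simp_all add: coeff_euler_op mult.assoc)

lemma degree_euler_op_le: "degree (euler_op p) \<le> degree p"
  by (rule degree_le) (simp add: coeff_euler_op coeff_eq_0)

lemma degree_funpow_euler_op_le: "degree ((euler_op ^^ k) p) \<le> degree p"
  by (rule degree_le) (simp add: coeff_funpow_euler_op coeff_eq_0)

lemma funpow_additive:
  fixes f :: "'a::plus \<Rightarrow> 'a"
  assumes "\<And>x y. f (x + y) = f x + f y"
  shows "(f ^^ n) (x + y) = (f ^^ n) x + (f ^^ n) y"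
  by (induction n) (simp_all add: assms)

lemma funpow_smult:
  fixes f :: "'a::comm_semiring_0 poly \<Rightarrow> 'a poly"
  assumes "\<And>c p. f (smult c p) = smult c (f p)"
  shows "(f ^^ n) (smult c p) = smult c ((f ^^ n) p)"
  by (induction n) (simp_all add: assms)

definition entire_fps :: "'a::{banach,real_normed_div_algebra} fps \<Rightarrow> bool" where
  "entire_fps F \<longleftrightarrow> fps_conv_radius F = \<infinity>"

lemma entire_fps_imp_norm_less_conv_radius: "entire_fps F \<Longrightarrow> norm x < fps_conv_radius F"
  by (simp add: entire_fps_def)

lemma entire_fps_const [simp]: "entire_fps (fps_const c)"
  by (simp add: entire_fps_def)

lemma entire_fps_0 [simp]: "entire_fps 0"
  by (simp add: entire_fps_def)

lemma entire_fps_1 [simp]: "entire_fps 1"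
  by (simp add: entire_fps_def)

lemma entire_fps_X [simp]: "entire_fps fps_X"
  by (simp add: entire_fps_def)

lemma entire_fps_exp [simp]: "entire_fps (fps_exp (c :: 'a::{banach,real_normed_field}))"
  by (simp add: entire_fps_def)

lemma entire_fps_add [simp]: "entire_fps F \<Longrightarrow> entire_fps G \<Longrightarrow> entire_fps (F + G)"
  unfolding entire_fps_def by (metis fps_conv_radius_add min.idem top.extremum_unique top_ereal_def)

lemma entire_fps_diff [simp]: "entire_fps F \<Longrightarrow> entire_fps G \<Longrightarrow> entire_fps (F - G)"
  unfolding entire_fps_def by (metis fps_conv_radius_diff min.idem top.extremum_unique top_ereal_def)

lemma entire_fps_mult [simp]: "entire_fps F \<Longrightarrow> entire_fps G \<Longrightarrow> entire_fps (F * G)"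
  unfolding entire_fps_def by (metis fps_conv_radius_mult min.idem top.extremum_unique top_ereal_def)

lemma entire_fps_power [simp]: "entire_fps F \<Longrightarrow> entire_fps (F ^ n)"
  unfolding entire_fps_def by (metis fps_conv_radius_power top.extremum_unique top_ereal_def)

lemma entire_fps_sum [simp]: "(\<And>i. i \<in> A \<Longrightarrow> entire_fps (F i)) \<Longrightarrow> entire_fps (sum F A)"
  by (induction A rule: infinite_finite_induct) simp_all

lemma eval_fps_sum:
  fixes F :: "'i \<Rightarrow> 'a::{banach,real_normed_div_algebra} fps"
  assumes "\<And>i. i \<in> A \<Longrightarrow> entire_fps (F i)"
  shows "eval_fps (sum F A) x = (\<Sum>i\<in>A. eval_fps (F i) x)"
  using assms
  by (induction A rule: infinite_finite_induct)
     (simp_all add: eval_fps_add entire_fps_imp_norm_less_conv_radius)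

definition fps_expm1_div :: "'a::field_char_0 \<Rightarrow> 'a fps" where
  "fps_expm1_div w = Abs_fps (\<lambda>n. if n = 0 then 0 else w ^ (n - 1) / fact n)"

lemma fps_exp_eq_1_plus_expm1_div: "fps_exp w = 1 + fps_const w * fps_expm1_div w"
proof (rule fps_ext)
  fix n
  show "fps_exp w $ n = (1 + fps_const w * fps_expm1_div w) $ n"
    by (cases n) (simp_all add: fps_expm1_div_def algebra_simps)
qed

lemma fps_deriv_expm1_div: "fps_deriv (fps_expm1_div w) = fps_exp w"
proof (rule fps_ext)
  fix n
  have "fact (Suc n) = (of_nat (Suc n) :: 'a) * fact n"
    by simp
  then show "fps_deriv (fps_expm1_div w) $ n = fps_exp w $ n"
    by (simp add: fps_expm1_div_def field_simps del: of_nat_Suc)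
qed

lemma fps_expm1_div_0: "fps_expm1_div 0 = fps_X"
proof (rule fps_ext)
  fix n
  show "fps_expm1_div 0 $ n = fps_X $ n"
    by (cases n) (auto simp: fps_expm1_div_def)
qed

lemma fps_expm1_div_nonzero:
  "w \<noteq> 0 \<Longrightarrow> fps_expm1_div w = fps_const (1 / w) * (fps_exp w - 1)"
  by (simp add: fps_exp_eq_1_plus_expm1_div)

lemma fps_deriv_expm1_div_power:
  "fps_deriv (fps_const (1 / fact (Suc j)) * fps_expm1_div w ^ Suc j) =
     fps_const (1 / fact j) * fps_expm1_div w ^ j
     + fps_const (w * of_nat (Suc j)) * (fps_const (1 / fact (Suc j)) * fps_expm1_div w ^ Suc j)"
proof -
  define C where "C = fps_expm1_div w"
  have fact_Suc: "of_nat (Suc j) / fact (Suc j) = (1 / fact j :: 'a)"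
    by (simp add: field_simps del: of_nat_Suc)
  have "fps_deriv (fps_const (1 / fact (Suc j)) * C ^ Suc j) =
      fps_const (of_nat (Suc j) / fact (Suc j)) * fps_exp w * C ^ j"
    by (simp only: fps_deriv_mult_const_left fps_deriv_power' fps_deriv_expm1_div C_def diff_Suc_1)
       (simp add: fps_of_nat[symmetric] del: of_nat_Suc)
  also have "\<dots> = fps_const (1 / fact j) * C ^ j
      + fps_const (w * (of_nat (Suc j) / fact (Suc j))) * C ^ Suc j"
    unfolding fact_Suc fps_exp_eq_1_plus_expm1_div C_def[symmetric] by (simp add: algebra_simps)
  finally show ?thesis
    by (simp add: C_def algebra_simps del: of_nat_Suc)
qed

lemma entire_fps_expm1_div [simp]:
  "entire_fps (fps_expm1_div (w :: 'a::{banach,real_normed_field}))"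
  by (cases "w = 0") (simp_all add: fps_expm1_div_0 fps_expm1_div_nonzero)

lemma eval_fps_expm1_div:
  fixes w :: "'a::{banach,real_normed_field}"
  shows "eval_fps (fps_expm1_div w) x = (if w = 0 then x else (exp (w * x) - 1) / w)"
  by (cases "w = 0")
     (simp_all add: fps_expm1_div_0 fps_expm1_div_nonzero eval_fps_mult eval_fps_diff
        entire_fps_imp_norm_less_conv_radius)

definition euler_exp_fps :: "'a::{banach,real_normed_field} \<Rightarrow> 'a \<Rightarrow> 'a poly \<Rightarrow> 'a fps"
  where "euler_exp_fps w z p = Abs_fps (\<lambda>k. w ^ k / fact k * poly ((euler_op ^^ k) p) z)"

lemma euler_exp_fps_add:
  "euler_exp_fps w z (p + q) = euler_exp_fps w z p + euler_exp_fps w z q"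
  by (rule fps_ext) (simp add: euler_exp_fps_def funpow_additive euler_op_add algebra_simps)

lemma euler_exp_fps_smult: "euler_exp_fps w z (smult c p) = fps_const c * euler_exp_fps w z p"
  by (rule fps_ext) (simp add: euler_exp_fps_def funpow_smult euler_op_smult algebra_simps)

lemma euler_exp_fps_0 [simp]: "euler_exp_fps w z 0 = 0"
  using euler_exp_fps_smult[of w z 0 0] by simp

lemma euler_exp_fps_nth_0: "euler_exp_fps w z p $ 0 = poly p z"
  by (simp add: euler_exp_fps_def)

lemma fps_deriv_euler_exp_fps:
  "fps_deriv (euler_exp_fps w z p) = fps_const w * euler_exp_fps w z (euler_op p)"
proof (rule fps_ext)
  fix n
  have "fact (Suc n) = (of_nat (Suc n) :: 'a) * fact n"
    by simp
  moreover have "(euler_op ^^ Suc n) p = (euler_op ^^ n) (euler_op p)"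
    by (simp only: funpow_Suc_right o_def)
  ultimately show
    "fps_deriv (euler_exp_fps w z p) $ n = (fps_const w * euler_exp_fps w z (euler_op p)) $ n"
    by (simp add: euler_exp_fps_def field_simps del: of_nat_Suc funpow.simps)
qed

lemma euler_exp_fps_eq_sum:
  "euler_exp_fps w z p = (\<Sum>m\<le>degree p. fps_const (coeff p m * z ^ m) * fps_exp (w * of_nat m))"
proof (rule fps_ext)
  fix k
  have "poly ((euler_op ^^ k) p) z = (\<Sum>m\<le>degree p. coeff ((euler_op ^^ k) p) m * z ^ m)"
    unfolding poly_altdef
    by (rule sum.mono_neutral_left) (auto simp: coeff_eq_0 degree_funpow_euler_op_le)
  then show "euler_exp_fps w z p $ k =
      (\<Sum>m\<le>degree p. fps_const (coeff p m * z ^ m) * fps_exp (w * of_nat m)) $ k"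
    by (simp add: euler_exp_fps_def fps_sum_nth coeff_funpow_euler_op sum_distrib_left
        power_mult_distrib field_simps)
qed

lemma entire_euler_exp_fps [simp]: "entire_fps (euler_exp_fps w z p)"
  unfolding euler_exp_fps_eq_sum by simp

lemma eval_euler_exp_fps: "eval_fps (euler_exp_fps w z p) x = poly p (exp (w * x) * z)"
proof -
  have "exp (w * of_nat m * x) = exp (w * x) ^ m" for m
    by (metis exp_of_nat_mult mult.commute mult.left_commute)
  then have "eval_fps (euler_exp_fps w z p) x = (\<Sum>m\<le>degree p. coeff p m * (exp (w * x) * z) ^ m)"
    unfolding euler_exp_fps_eq_sum
    by (simp add: eval_fps_sum eval_fps_mult entire_fps_imp_norm_less_conv_radius
        power_mult_distrib mult_ac)
  then show ?thesis
    by (simp add: poly_altdef)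
qed

locale euler_lowering_op =
  fixes D :: "'a::{banach,real_normed_field} poly \<Rightarrow> 'a poly"
  assumes D_add: "D (p + q) = D p + D q"
    and D_smult: "D (smult c p) = smult c (D p)"
    and D_euler_op: "D (euler_op p) = euler_op (D p) + D p"
    and D_lowers_degree: "D p = 0 \<or> degree (D p) < degree p"
begin

lemma funpow_D_euler_op:
  "(D ^^ j) (euler_op p) = euler_op ((D ^^ j) p) + smult (of_nat j) ((D ^^ j) p)"
proof (induction j)
  case (Suc j)
  have "(D ^^ Suc j) (euler_op p) = D (euler_op ((D ^^ j) p) + smult (of_nat j) ((D ^^ j) p))"
    by (simp add: Suc)
  also have "\<dots> = euler_op ((D ^^ Suc j) p) + smult (1 + of_nat j) ((D ^^ Suc j) p)"
    by (simp add: D_add D_smult D_euler_op smult_add_left)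
  finally show ?case
    by simp
qed simp

lemma funpow_D_eq_0: "degree p < n \<Longrightarrow> (D ^^ n) p = 0"
proof (induction n arbitrary: p)
  case (Suc n)
  have "(D ^^ n) 0 = 0"
    using funpow_smult[of D n 0 0] D_smult by simp
  then show ?case
    using D_lowers_degree[of p] Suc by (auto simp: funpow_Suc_right simp del: funpow.simps)
qed simp

definition plus_euler :: "'a \<Rightarrow> 'a poly \<Rightarrow> 'a poly" where
  "plus_euler w p = smult w (euler_op p) + D p"

lemma degree_plus_euler_le: "degree (plus_euler w p) \<le> degree p"
proof -
  have "degree (D p) \<le> degree p"
    using D_lowers_degree[of p] by auto
  then show ?thesis
    unfolding plus_euler_def
    by (meson degree_add_le degree_euler_op_le degree_smult_le order.trans)
qed

lemma funpow_D_plus_euler: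
  "(D ^^ j) (plus_euler w p) =
     smult w (euler_op ((D ^^ j) p)) + smult (w * of_nat j) ((D ^^ j) p) + (D ^^ Suc j) p"
proof -
  have "(D ^^ j) (plus_euler w p) = smult w ((D ^^ j) (euler_op p)) + (D ^^ j) (D p)"
    by (simp add: plus_euler_def funpow_additive funpow_smult D_add D_smult)
  then show ?thesis
    by (simp add: funpow_D_euler_op funpow_Suc_right smult_add_right del: funpow.simps)
qed


(* (exp (x w E) exp (C(x) D) p)(z) as a power series in x; exact once degree p < n. *)
definition split_exp_fps :: "'a \<Rightarrow> 'a \<Rightarrow> nat \<Rightarrow> 'a poly \<Rightarrow> 'a fps" where
  "split_exp_fps w z n p =
     (\<Sum>j<n. fps_const (1 / fact j) * fps_expm1_div w ^ j * euler_exp_fps w z ((D ^^ j) p))"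

lemma split_exp_fps_nth_0: "0 < n \<Longrightarrow> split_exp_fps w z n p $ 0 = poly p z"
proof -
  assume "0 < n"
  have "(fps_const (1 / fact j) * fps_expm1_div w ^ j * euler_exp_fps w z ((D ^^ j) p)) $ 0 =
      (if j = 0 then poly p z else 0)" for j
    by (simp add: euler_exp_fps_nth_0 fps_expm1_div_def)
  with \<open>0 < n\<close> show ?thesis
    by (simp add: split_exp_fps_def fps_sum_nth)
qed

lemma fps_deriv_split_exp_fps:
  assumes "degree p < n"
  shows "fps_deriv (split_exp_fps w z n p) = split_exp_fps w z n (plus_euler w p)"
proof -
  obtain m where n: "n = Suc m"
    using assms by (cases n) auto
  define t where "t j = fps_const (1 / fact j) * fps_expm1_div w ^ j" for j
  define P where "P j = euler_exp_fps w z ((D ^^ j) p)" for j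
  define Q where "Q j = euler_exp_fps w z (euler_op ((D ^^ j) p))" for j
  have split_eq: "split_exp_fps w z n q = (\<Sum>j<n. t j * euler_exp_fps w z ((D ^^ j) q))" for q
    by (simp add: split_exp_fps_def t_def)
  have deriv_t: "fps_deriv (t (Suc j)) = t j + fps_const (w * of_nat (Suc j)) * t (Suc j)" for j
    unfolding t_def by (rule fps_deriv_expm1_div_power)
  have deriv_t_0: "fps_deriv (t 0) = 0"
    by (simp add: t_def)
  have "fps_deriv (split_exp_fps w z n p) =
      (\<Sum>j<n. fps_deriv (t j) * P j) + (\<Sum>j<n. t j * fps_const w * Q j)"
    by (simp add: split_eq fps_deriv_sum fps_deriv_euler_exp_fps P_def Q_def sum.distrib[symmetric]
        algebra_simps)
  also have "(\<Sum>j<n. fps_deriv (t j) * P j) =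
      (\<Sum>j<n. fps_const (w * of_nat j) * t j * P j) + (\<Sum>j<m. t j * P (Suc j))"
    unfolding n sum.lessThan_Suc_shift
    by (simp add: deriv_t deriv_t_0 sum.distrib algebra_simps del: of_nat_Suc)
  also have "(\<Sum>j<m. t j * P (Suc j)) = (\<Sum>j<n. t j * P (Suc j))"
    using funpow_D_eq_0[of p n] assms by (simp add: n P_def)
  finally show ?thesis
    by (simp add: split_eq funpow_D_plus_euler euler_exp_fps_add euler_exp_fps_smult P_def Q_def
        sum.distrib[symmetric] fps_const_mult[symmetric] algebra_simps del: fps_const_mult)
qed

lemma split_exp_fps_nth:
  "degree p < n \<Longrightarrow> split_exp_fps w z n p $ k = poly ((plus_euler w ^^ k) p) z / fact k"
proof (induction k arbitrary: p)
  case 0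
  then show ?case
    by (simp add: split_exp_fps_nth_0)
next
  case (Suc k)
  have "split_exp_fps w z n p $ Suc k = fps_deriv (split_exp_fps w z n p) $ k / of_nat (Suc k)"
    by (simp del: of_nat_Suc)
  also have "\<dots> = split_exp_fps w z n (plus_euler w p) $ k / of_nat (Suc k)"
    using Suc.prems by (simp only: fps_deriv_split_exp_fps)
  also have "\<dots> = poly ((plus_euler w ^^ k) (plus_euler w p)) z / fact k / of_nat (Suc k)"
    using Suc.prems degree_plus_euler_le[of w p] by (subst Suc.IH) auto
  also have "\<dots> = poly ((plus_euler w ^^ Suc k) p) z / fact (Suc k)"
    by (simp add: funpow_Suc_right field_simps del: funpow.simps of_nat_Suc)
  finally show ?case .
qed

lemma entire_split_exp_fps [simp]: "entire_fps (split_exp_fps w z n p)"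
  by (simp add: split_exp_fps_def)

lemma eval_split_exp_fps:
  "eval_fps (split_exp_fps w z n p) x =
     (\<Sum>j<n. eval_fps (fps_expm1_div w) x ^ j / fact j * poly ((D ^^ j) p) (exp (w * x) * z))"
  by (simp add: split_exp_fps_def eval_fps_sum eval_fps_mult eval_fps_power eval_euler_exp_fps
      entire_fps_imp_norm_less_conv_radius)

theorem exp_plus_euler_sums:
  assumes "degree p < n"
  shows "(\<lambda>k. x ^ k / fact k * poly ((plus_euler w ^^ k) p) z) sums
           (\<Sum>j<n. (if w = 0 then x else (exp (w * x) - 1) / w) ^ j / fact j
                    * poly ((D ^^ j) p) (exp (w * x) * z))"
proof -
  have "(\<lambda>k. split_exp_fps w z n p $ k * x ^ k) sums eval_fps (split_exp_fps w z n p) x"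
    by (rule sums_eval_fps) (simp add: entire_fps_imp_norm_less_conv_radius)
  then show ?thesis
    using assms by (simp add: split_exp_fps_nth eval_split_exp_fps eval_fps_expm1_div mult.commute)
qed

end

lemma coeff_Delta_t:
  "coeff (Delta_t \<theta> p) n = (complex_of_real \<theta> + of_nat n) * of_nat (Suc n) * coeff p (Suc n)"
  by (cases n) (simp_all add: Delta_t_def coeff_pderiv mult_pCons_left algebra_simps)

lemma euler_lowering_op_Delta_t: "euler_lowering_op (Delta_t \<theta>)"
proof
  fix p q :: "complex poly" and c :: complex
  show "Delta_t \<theta> (p + q) = Delta_t \<theta> p + Delta_t \<theta> q"
    by (rule poly_eqI) (simp add: coeff_Delta_t algebra_simps)
  show "Delta_t \<theta> (smult c p) = smult c (Delta_t \<theta> p)"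
    by (rule poly_eqI) (simp add: coeff_Delta_t algebra_simps)
  show "Delta_t \<theta> (euler_op p) = euler_op (Delta_t \<theta> p) + Delta_t \<theta> p"
    by (rule poly_eqI) (simp add: coeff_Delta_t coeff_euler_op algebra_simps)
  show "Delta_t \<theta> p = 0 \<or> degree (Delta_t \<theta> p) < degree p"
  proof (cases "degree p = 0")
    case True
    then have "pderiv p = 0"
      by (simp add: pderiv_eq_0_iff)
    then show ?thesis
      by (simp add: Delta_t_def)
  next
    case False
    have "degree (Delta_t \<theta> p) \<le> degree p - 1"
      by (rule degree_le) (simp add: coeff_Delta_t coeff_eq_0)
    with False have "degree (Delta_t \<theta> p) < degree p"
      by linarith
    then show ?thesis ..
  qed
qed

lemma Delta_tw_eq_plus_euler:
  "Delta_tw \<theta> \<omega> = euler_lowering_op.plus_euler (Delta_t \<theta>) (complex_of_real \<omega>)"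
  by (simp add: fun_eq_iff Delta_tw_def Delta_t_def euler_op_def algebra_simps
      euler_lowering_op.plus_euler_def[OF euler_lowering_op_Delta_t])

theorem lemma1:
  fixes \<theta> \<omega> a :: real and f :: "complex poly" and z :: complex
  assumes "\<theta> \<ge> 0"
  shows "op_exp_term a (Delta_tw \<theta> \<omega>) f z
           sums op_exp (expm1_div a \<omega>) (Delta_t \<theta>) f (complex_of_real (exp (a * \<omega>)) * z)"
proof -
  interpret euler_lowering_op "Delta_t \<theta>"
    by (rule euler_lowering_op_Delta_t)
  define w where "w = complex_of_real \<omega>"
  define x where "x = complex_of_real a"
  have exp_wx: "exp (w * x) = complex_of_real (exp (a * \<omega>))"
    unfolding w_def x_def of_real_mult[symmetric] exp_of_real by (simp add: mult.commute)
  have expm1: "(if w = 0 then x else (exp (w * x) - 1) / w) = complex_of_real (expm1_div a \<omega>)"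
    unfolding exp_wx by (simp add: expm1_div_def w_def x_def)
  have "op_exp_term a (Delta_tw \<theta> \<omega>) f z =
      (\<lambda>k. x ^ k / fact k * poly ((plus_euler w ^^ k) f) z)"
    by (simp add: fun_eq_iff op_exp_term_def Delta_tw_eq_plus_euler w_def x_def)
  moreover have "op_exp (expm1_div a \<omega>) (Delta_t \<theta>) f (exp (w * x) * z) =
      (\<Sum>j<Suc (degree f). op_exp_term (expm1_div a \<omega>) (Delta_t \<theta>) f (exp (w * x) * z) j)"
    unfolding op_exp_def op_exp_term_def by (rule suminf_finite) (auto simp: funpow_D_eq_0)
  ultimately show ?thesis
    using exp_plus_euler_sums[of f "Suc (degree f)" x w z]
    by (simp add: expm1 exp_wx op_exp_term_def)
qed

end
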